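(* Fix $j\in\mathbb{Z}$ and let $k_n=\lfloor\log_2 n+\log_2\log_2 n\rfloor+j$. Then, under the conditional distribution given $X_n^*=2^{k_n}$, \[ \frac{S_n}{X_n^*}-2^{-j}\,2^{\{\log_2 n+\log_2\log_2 n\}}\xrightarrow{\ \mathbb{P}\ }1 . \]
   Context: $X_1,X_2,\ldots$ are iid with $\mathbb{P}\{X_i=2^k\}=2^{-k}$, $k\in\{1,2,\ldots\}$; $S_n=\sum_{i\le n}X_i$, $X_n^*=\max_{i\le n}X_i$; $\{y\}$ denotes the fractional part of $y$. Convergence in conditional probability means that for every $\varepsilon>0$ the conditional probability (given $X_n^*=2^{k_n}$) that the left side differs from $1$ by more than $\varepsilon$ tends to $0$. *)

theory Defs
  imports "HOL-Probability.Probability"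
begin

definition Ssum :: "(nat \<Rightarrow> 'a \<Rightarrow> real) \<Rightarrow> nat \<Rightarrow> 'a \<Rightarrow> real" where
  "Ssum X n \<omega> = (\<Sum>i=1..n. X i \<omega>)"

definition Xmax :: "(nat \<Rightarrow> 'a \<Rightarrow> real) \<Rightarrow> nat \<Rightarrow> 'a \<Rightarrow> real" where
  "Xmax X n \<omega> = Max ((\<lambda>i. X i \<omega>) ` {1..n})"

definition kseq :: "int \<Rightarrow> nat \<Rightarrow> int" where
  "kseq j n = \<lfloor>log 2 (real n) + log 2 (log 2 (real n))\<rfloor> + j"

end

theory Submission
  imports Defs "HOL-Real_Asymp.Real_Asymp"
begin

text \<open>Given that the maximum of \<open>X\<^sub>1, \<dots>, X\<^sub>n\<close> is \<open>2^k\<close>, typically exactly one \<open>X\<^sub>i\<close> attains it and the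
  other \<open>n - 1\<close> variables are independent and take only the values \<open>2, \<dots>, 2^(k-1)\<close>; each of them then
  has mean \<open>k - 1\<close> and variance at most \<open>2^k\<close>. Hence \<open>S\<^sub>n / 2^k - 1\<close> is \<open>(n - 1)(k - 1) / 2^k\<close> up to a
  Chebyshev error, and for \<open>k = k\<^sub>n\<close> this centering is asymptotically \<open>n log\<^sub>2 n / 2^k\<^sub>n\<close>, which is the
  term \<open>2^-j 2^{log\<^sub>2 n + log\<^sub>2 log\<^sub>2 n}\<close> of the statement. Ties at the maximum and Chebyshev failures have
  probability \<open>O(n^2 / 4^k)\<close>, whereas the conditioning event has probability at least \<open>n / 2^(k+1)\<close>
  once \<open>4n \<le> 2^k\<close>; so the conditional probability of a deviation is \<open>O(n / 2^k\<^sub>n) = O(1 / log n)\<close>.\<close>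

lemma (in prob_space) expectation_square_sum_indep:
  fixes Z :: "'i \<Rightarrow> 'a \<Rightarrow> real"
  assumes "finite J"
    and meas: "\<And>l. l \<in> J \<Longrightarrow> random_variable borel (Z l)"
    and bound: "\<And>l \<omega>. l \<in> J \<Longrightarrow> \<omega> \<in> space M \<Longrightarrow> \<bar>Z l \<omega>\<bar> \<le> B"
    and centered: "\<And>l. l \<in> J \<Longrightarrow> expectation (Z l) = 0"
    and indep: "\<And>a b. a \<in> J \<Longrightarrow> b \<in> J \<Longrightarrow> a \<noteq> b \<Longrightarrow> indep_var borel (Z a) borel (Z b)"
  shows "expectation (\<lambda>\<omega>. (\<Sum>l\<in>J. Z l \<omega>)\<^sup>2) = (\<Sum>l\<in>J. expectation (\<lambda>\<omega>. (Z l \<omega>)\<^sup>2))"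
proof -
  have integrable_Z: "integrable M (Z l)" if "l \<in> J" for l
    using that meas bound by (intro integrable_const_bound[where B=B]) auto
  have integrable_prod: "integrable M (\<lambda>\<omega>. Z a \<omega> * Z b \<omega>)" if "a \<in> J" "b \<in> J" for a b
  proof (rule integrable_const_bound[where B="B * B"])
    show "AE \<omega> in M. norm (Z a \<omega> * Z b \<omega>) \<le> B * B"
      using that bound by (auto simp: abs_mult intro!: mult_mono order_trans[OF abs_ge_zero])
  qed (use that meas in auto)
  have cross: "expectation (\<lambda>\<omega>. Z a \<omega> * Z b \<omega>) = (if a = b then expectation (\<lambda>\<omega>. (Z a \<omega>)\<^sup>2) else 0)"
    if "a \<in> J" "b \<in> J" for a b
  proof (cases "a = b")
    case False
    then have "expectation (\<lambda>\<omega>. Z a \<omega> * Z b \<omega>) = expectation (Z a) * expectation (Z b)"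
      using that by (intro indep_var_lebesgue_integral indep integrable_Z)
    then show ?thesis using False that centered by simp
  qed (simp add: power2_eq_square)
  have "expectation (\<lambda>\<omega>. (\<Sum>l\<in>J. Z l \<omega>)\<^sup>2) = (\<Sum>a\<in>J. \<Sum>b\<in>J. expectation (\<lambda>\<omega>. Z a \<omega> * Z b \<omega>))"
    using integrable_prod by (simp add: power2_eq_square sum_product Bochner_Integration.integrable_sum)
  also have "\<dots> = (\<Sum>a\<in>J. expectation (\<lambda>\<omega>. (Z a \<omega>)\<^sup>2))"
    using \<open>finite J\<close> by (simp add: cross if_distrib cong: sum.cong)
  finally show ?thesis .
qed

text \<open>On the values \<open>2^t\<close> (\<open>t \<ge> 1\<close>) taken by the \<open>X\<^sub>i\<close> this is \<open>x \<cdot> [x < 2^k]\<close>; written as a finite sum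
  of indicators, its moments are immediate.\<close>
definition trunc_pow2 :: "nat \<Rightarrow> real \<Rightarrow> real" where
  "trunc_pow2 k x = (\<Sum>t\<in>{1..<k}. if x = 2 ^ t then 2 ^ t else 0)"

lemma borel_measurable_trunc_pow2 [measurable]: "trunc_pow2 k \<in> borel_measurable borel"
  unfolding trunc_pow2_def by measurable

lemma sum_if_pow2_eq:
  assumes "finite T" "s \<in> T"
  shows "(\<Sum>t\<in>T. if (2::real) ^ s = 2 ^ t then f t else 0) = (f s :: real)"
  using assms by (simp cong: sum.cong)

lemma trunc_pow2_pow2: "1 \<le> s \<Longrightarrow> s < k \<Longrightarrow> trunc_pow2 k (2 ^ s) = 2 ^ s"
  unfolding trunc_pow2_def by (rule sum_if_pow2_eq) auto

lemma trunc_pow2_square: "(trunc_pow2 k x)\<^sup>2 = (\<Sum>t\<in>{1..<k}. if x = 2 ^ t then 4 ^ t else 0)"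
proof (cases "\<exists>s\<in>{1..<k}. x = 2 ^ s")
  case True
  then obtain s where "s \<in> {1..<k}" "x = 2 ^ s" by auto
  then show ?thesis
    by (simp add: trunc_pow2_pow2 sum_if_pow2_eq power2_eq_square flip: power_mult_distrib)
next
  case False
  then have "trunc_pow2 k x = 0" "(\<Sum>t\<in>{1..<k}. if x = 2 ^ t then 4 ^ t else 0) = (0::real)"
    unfolding trunc_pow2_def by (auto intro!: sum.neutral)
  then show ?thesis by simp
qed

lemma abs_trunc_pow2_le: "\<bar>trunc_pow2 k x\<bar> \<le> 2 ^ k"
proof -
  have "\<bar>trunc_pow2 k x\<bar> \<le> (\<Sum>t\<in>{1..<k}. (2::real) ^ t)"
    unfolding trunc_pow2_def by (rule order_trans[OF sum_abs sum_mono]) auto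
  also have "\<dots> \<le> (\<Sum>t<k. (2::real) ^ t)" by (intro sum_mono2) auto
  also have "\<dots> = 2 ^ k - 1" by (induction k) auto
  finally show ?thesis by simp
qed

lemma abs_trunc_pow2_deviation_le: "\<bar>trunc_pow2 k x - (real k - 1)\<bar> \<le> 2 ^ k + \<bar>real k - 1\<bar>"
  using abs_trunc_pow2_le[of k x] by linarith

lemma X_le_Xmax: "i \<in> {1..n} \<Longrightarrow> X i \<omega> \<le> Xmax X n \<omega>"
  unfolding Xmax_def by (rule Max_ge) auto

lemma Xmax_attained: "1 \<le> n \<Longrightarrow> \<exists>i\<in>{1..n}. X i \<omega> = Xmax X n \<omega>"
proof -
  assume "1 \<le> n"
  then have "Max ((\<lambda>i. X i \<omega>) ` {1..n}) \<in> (\<lambda>i. X i \<omega>) ` {1..n}" by (intro Max_in) auto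
  then show ?thesis unfolding Xmax_def by auto
qed

lemma Ssum_unique_max:
  assumes "i \<in> {1..n}" "X i \<omega> = 2 ^ k"
    and smaller: "\<And>l. l \<in> {1..n} - {i} \<Longrightarrow> X l \<omega> < 2 ^ k \<and> (\<exists>t. X l \<omega> = 2 ^ Suc t)"
  shows "Ssum X n \<omega> = 2 ^ k + (\<Sum>l\<in>{1..n} - {i}. trunc_pow2 k (X l \<omega>))"
proof -
  have trunc_eq: "trunc_pow2 k (X l \<omega>) = X l \<omega>" if l: "l \<in> {1..n} - {i}" for l
  proof -
    obtain t where t: "X l \<omega> = 2 ^ Suc t" "(2::real) ^ Suc t < 2 ^ k"
      using smaller[OF l] by auto
    then have "Suc t < k" by (metis power_strict_increasing_iff one_less_numeral_iff semiring_norm(76))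
    then show ?thesis unfolding t(1) by (simp add: trunc_pow2_pow2 del: power_Suc)
  qed
  have "(\<Sum>l\<in>{1..n} - {i}. trunc_pow2 k (X l \<omega>)) = (\<Sum>l\<in>{1..n} - {i}. X l \<omega>)"
    using trunc_eq by (rule sum.cong[OF refl])
  then show ?thesis
    using assms(1,2) unfolding Ssum_def by (simp add: sum.remove)
qed

lemma large_ratio_deviation_cases:
  assumes n: "1 \<le> n" and pow2: "\<forall>l\<in>{1..n}. \<exists>t. X l \<omega> = 2 ^ Suc t" and max: "Xmax X n \<omega> = 2 ^ k"
    and far: "\<epsilon> < \<bar>Ssum X n \<omega> / Xmax X n \<omega> - c - 1\<bar>"
    and centering: "\<bar>real (n - 1) * (real k - 1) / 2 ^ k - c\<bar> \<le> \<epsilon> / 2"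
  obtains i l where "i \<in> {1..n}" "l \<in> {1..n} - {i}" "X i \<omega> = 2 ^ k" "X l \<omega> = 2 ^ k"
  | i where "i \<in> {1..n}" "X i \<omega> = 2 ^ k"
      "\<epsilon> * 2 ^ k / 2 \<le> \<bar>\<Sum>l\<in>{1..n} - {i}. trunc_pow2 k (X l \<omega>) - (real k - 1)\<bar>"
proof -
  obtain i where i: "i \<in> {1..n}" "X i \<omega> = 2 ^ k"
    using Xmax_attained[OF n, of X \<omega>] max by auto
  define W where "W = (\<Sum>l\<in>{1..n} - {i}. trunc_pow2 k (X l \<omega>) - (real k - 1))"
  show thesis
  proof (cases "\<exists>l\<in>{1..n} - {i}. X l \<omega> = 2 ^ k")
    case True
    then show thesis using i that(1) by blast
  next
    case False
    then have "X l \<omega> < 2 ^ k \<and> (\<exists>t. X l \<omega> = 2 ^ Suc t)" if "l \<in> {1..n} - {i}" for l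
      using X_le_Xmax[of l n X \<omega>] that max pow2 by force
    then have "Ssum X n \<omega> = 2 ^ k + (\<Sum>l\<in>{1..n} - {i}. trunc_pow2 k (X l \<omega>))"
      by (rule Ssum_unique_max[where X=X, OF i])
    then have "Ssum X n \<omega> = 2 ^ k + (W + real (n - 1) * (real k - 1))"
      using i(1) by (simp add: W_def sum_subtractf)
    then have "Ssum X n \<omega> / Xmax X n \<omega> - c - 1 = W / 2 ^ k + (real (n - 1) * (real k - 1) / 2 ^ k - c)"
      using max by (simp add: field_simps)
    then have "\<epsilon> < \<bar>W / 2 ^ k\<bar> + \<epsilon> / 2"
      using far centering abs_triangle_ineq[of "W / 2 ^ k" "real (n - 1) * (real k - 1) / 2 ^ k - c"]
      by linarith
    then have "\<epsilon> * 2 ^ k / 2 \<le> \<bar>W\<bar>"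
      by (simp add: abs_div field_simps)
    then show thesis using i that(2) by (simp add: W_def)
  qed
qed

locale st_petersburg = prob_space +
  fixes X :: "nat \<Rightarrow> 'a \<Rightarrow> real"
  assumes indep_X: "indep_vars (\<lambda>_. borel) X {1..}"
    and prob_X_eq_pow2: "\<And>i k. 1 \<le> i \<Longrightarrow> 1 \<le> k \<Longrightarrow> prob {\<omega> \<in> space M. X i \<omega> = 2 ^ k} = 1 / 2 ^ k"
begin

lemma measurable_X [measurable]: "1 \<le> i \<Longrightarrow> X i \<in> borel_measurable M"
  using indep_X by (auto simp: indep_vars_def)

lemma measurable_Xmax [measurable]: "Xmax X n \<in> borel_measurable M"
  unfolding Xmax_def by (intro borel_measurable_Max) auto

lemma integrable_bounded_X:
  fixes f :: "real \<Rightarrow> real"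
  assumes "1 \<le> i" "f \<in> borel_measurable borel" "\<And>x. \<bar>f x\<bar> \<le> B"
  shows "integrable M (\<lambda>\<omega>. f (X i \<omega>))"
  using assms by (intro integrable_const_bound[where B=B]) auto

lemma indep_var_X_sum:
  fixes f g :: "real \<Rightarrow> real"
  assumes J: "finite J" "J \<subseteq> {1..}" "i \<notin> J" "1 \<le> i"
    and f: "f \<in> borel_measurable borel" and g: "g \<in> borel_measurable borel"
  shows "indep_var borel (\<lambda>\<omega>. f (X i \<omega>)) borel (\<lambda>\<omega>. \<Sum>l\<in>J. g (X l \<omega>))"
proof -
  define F where "F l = (if l = i then f else g)" for l
  have "indep_vars (\<lambda>_. borel) (\<lambda>l \<omega>. F l (X l \<omega>)) {1..}"
    using f g by (intro indep_vars_compose2[OF indep_X]) (simp add: F_def)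
  then have "indep_vars (\<lambda>_. borel) (\<lambda>l \<omega>. F l (X l \<omega>)) (insert i J)"
    by (rule indep_vars_subset) (use J in auto)
  from indep_vars_sum[OF J(1,3) this]
  have "indep_var borel (\<lambda>\<omega>. F i (X i \<omega>)) borel (\<lambda>\<omega>. \<Sum>l\<in>J. F l (X l \<omega>))" .
  moreover have "(\<lambda>\<omega>. \<Sum>l\<in>J. F l (X l \<omega>)) = (\<lambda>\<omega>. \<Sum>l\<in>J. g (X l \<omega>))"
    using J(3) by (auto simp: F_def intro!: sum.cong)
  ultimately show ?thesis by (simp add: F_def)
qed

lemma indep_var_X_X:
  fixes f g :: "real \<Rightarrow> real"
  assumes "1 \<le> i" "1 \<le> l" "i \<noteq> l" "f \<in> borel_measurable borel" "g \<in> borel_measurable borel"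
  shows "indep_var borel (\<lambda>\<omega>. f (X i \<omega>)) borel (\<lambda>\<omega>. g (X l \<omega>))"
  using indep_var_X_sum[of "{l}" i f g] assms by simp

lemma expectation_if_X_eq:
  assumes "1 \<le> i"
  shows "expectation (\<lambda>\<omega>. if X i \<omega> = x then c else 0) = c * prob {\<omega> \<in> space M. X i \<omega> = x}"
proof -
  have "expectation (\<lambda>\<omega>. if X i \<omega> = x then c else 0)
      = expectation (\<lambda>\<omega>. c * indicator {\<omega> \<in> space M. X i \<omega> = x} \<omega>)"
    by (intro Bochner_Integration.integral_cong) (auto simp: indicator_def)
  also have "\<dots> = c * prob {\<omega> \<in> space M. X i \<omega> = x}"
    using assms by simp
  finally show ?thesis .
qed

lemma integrable_if_X_eq: "1 \<le> i \<Longrightarrow> integrable M (\<lambda>\<omega>. if X i \<omega> = x then c else (0::real))"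
  by (rule integrable_bounded_X[where B="\<bar>c\<bar>"]) auto

lemma expectation_trunc_pow2:
  assumes "1 \<le> i" "1 \<le> k"
  shows "expectation (\<lambda>\<omega>. trunc_pow2 k (X i \<omega>)) = real k - 1"
proof -
  have "expectation (\<lambda>\<omega>. trunc_pow2 k (X i \<omega>))
      = (\<Sum>t\<in>{1..<k}. expectation (\<lambda>\<omega>. if X i \<omega> = 2 ^ t then 2 ^ t else 0))"
    unfolding trunc_pow2_def using assms by (intro Bochner_Integration.integral_sum integrable_if_X_eq)
  also have "\<dots> = (\<Sum>t\<in>{1..<k}. 1)"
    using assms by (intro sum.cong) (auto simp: expectation_if_X_eq prob_X_eq_pow2)
  finally show ?thesis using assms by simp
qed

lemma expectation_trunc_pow2_square:
  assumes "1 \<le> i" "1 \<le> k"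
  shows "expectation (\<lambda>\<omega>. (trunc_pow2 k (X i \<omega>))\<^sup>2) = 2 ^ k - 2"
proof -
  have "expectation (\<lambda>\<omega>. (trunc_pow2 k (X i \<omega>))\<^sup>2)
      = (\<Sum>t\<in>{1..<k}. expectation (\<lambda>\<omega>. if X i \<omega> = 2 ^ t then 4 ^ t else 0))"
    unfolding trunc_pow2_square using assms by (intro Bochner_Integration.integral_sum integrable_if_X_eq)
  also have "\<dots> = (\<Sum>t\<in>{1..<k}. 2 ^ t)"
  proof (intro sum.cong refl)
    fix t :: nat
    have "(4::real) ^ t = 2 ^ t * 2 ^ t" by (simp flip: power_mult_distrib)
    then show "t \<in> {1..<k} \<Longrightarrow> expectation (\<lambda>\<omega>. if X i \<omega> = 2 ^ t then 4 ^ t else 0) = (2::real) ^ t"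
      using assms by (simp add: expectation_if_X_eq prob_X_eq_pow2)
  qed
  also have "\<dots> = 2 ^ k - 2"
    using \<open>1 \<le> k\<close> by (induction k rule: dec_induct) auto
  finally show ?thesis .
qed

lemma expectation_square_trunc_deviation_le:
  assumes J: "finite J" "J \<subseteq> {1..}" and k: "1 \<le> k"
  shows "expectation (\<lambda>\<omega>. (\<Sum>l\<in>J. trunc_pow2 k (X l \<omega>) - (real k - 1))\<^sup>2) \<le> card J * 2 ^ k"
proof -
  have trunc_sq_le: "(trunc_pow2 k x)\<^sup>2 \<le> (2 ^ k)\<^sup>2" for x
    using power_mono[OF abs_trunc_pow2_le[of k x], where n=2] by simp
  have int_trunc: "integrable M (\<lambda>\<omega>. trunc_pow2 k (X l \<omega>))" if "1 \<le> l" for l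
    by (rule integrable_bounded_X[where B="2 ^ k"]) (use that abs_trunc_pow2_le in auto)
  have int_trunc_sq: "integrable M (\<lambda>\<omega>. (trunc_pow2 k (X l \<omega>))\<^sup>2)" if "1 \<le> l" for l
    by (rule integrable_bounded_X[where f="\<lambda>x. (trunc_pow2 k x)\<^sup>2" and B="(2 ^ k)\<^sup>2"])
      (use that trunc_sq_le in auto)
  have "expectation (\<lambda>\<omega>. (\<Sum>l\<in>J. trunc_pow2 k (X l \<omega>) - (real k - 1))\<^sup>2)
      = (\<Sum>l\<in>J. expectation (\<lambda>\<omega>. (trunc_pow2 k (X l \<omega>) - (real k - 1))\<^sup>2))"
  proof (rule expectation_square_sum_indep[where B="2 ^ k + \<bar>real k - 1\<bar>"])
    fix l \<omega> assume "l \<in> J"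
    then have l: "1 \<le> l" using J by auto
    show "\<bar>trunc_pow2 k (X l \<omega>) - (real k - 1)\<bar> \<le> 2 ^ k + \<bar>real k - 1\<bar>"
      by (rule abs_trunc_pow2_deviation_le)
    show "random_variable borel (\<lambda>\<omega>. trunc_pow2 k (X l \<omega>) - (real k - 1))"
      using l by (auto intro!: borel_measurable_diff measurable_compose[OF measurable_X])
    show "expectation (\<lambda>\<omega>. trunc_pow2 k (X l \<omega>) - (real k - 1)) = 0"
      using l k int_trunc by (simp add: expectation_trunc_pow2 prob_space)
  next
    fix a b assume "a \<in> J" "b \<in> J" "a \<noteq> b"
    then show "indep_var borel (\<lambda>\<omega>. trunc_pow2 k (X a \<omega>) - (real k - 1))
        borel (\<lambda>\<omega>. trunc_pow2 k (X b \<omega>) - (real k - 1))"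
      using J by (intro indep_var_X_X[where f="\<lambda>x. trunc_pow2 k x - (real k - 1)"]) auto
  qed fact
  also have "\<dots> \<le> (\<Sum>l\<in>J. 2 ^ k)"
  proof (intro sum_mono)
    fix l assume "l \<in> J"
    then have l: "1 \<le> l" using J by auto
    have "expectation (\<lambda>\<omega>. (trunc_pow2 k (X l \<omega>) - (real k - 1))\<^sup>2) = variance (\<lambda>\<omega>. trunc_pow2 k (X l \<omega>))"
      using l k by (simp add: expectation_trunc_pow2)
    also have "\<dots> = 2 ^ k - 2 - (real k - 1)\<^sup>2"
      using l k by (subst variance_eq)
        (simp_all add: int_trunc int_trunc_sq expectation_trunc_pow2 expectation_trunc_pow2_square)
    also have "\<dots> \<le> 2 ^ k" using zero_le_power2[of "real k - 1"] by linarith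
    finally show "expectation (\<lambda>\<omega>. (trunc_pow2 k (X l \<omega>) - (real k - 1))\<^sup>2) \<le> 2 ^ k" .
  qed
  finally show ?thesis by simp
qed

lemma prob_X_eq_deviation_le:
  assumes J: "finite J" "J \<subseteq> {1..}" "i \<notin> J" and i: "1 \<le> i" and k: "1 \<le> k" and "0 < \<delta>"
  shows "prob {\<omega> \<in> space M. X i \<omega> = 2 ^ k \<and> \<delta> \<le> \<bar>\<Sum>l\<in>J. trunc_pow2 k (X l \<omega>) - (real k - 1)\<bar>}
    \<le> card J / \<delta>\<^sup>2"
proof -
  define W where "W \<omega> = (\<Sum>l\<in>J. trunc_pow2 k (X l \<omega>) - (real k - 1))" for \<omega>
  have W_measurable [measurable]: "W \<in> borel_measurable M"
    unfolding W_def using J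
    by (auto intro!: borel_measurable_sum borel_measurable_diff measurable_compose[OF measurable_X])
  have "indep_var borel (\<lambda>\<omega>. X i \<omega>) borel W"
    using indep_var_X_sum[OF J i, of "\<lambda>x. x" "\<lambda>x. trunc_pow2 k x - (real k - 1)"]
    by (simp add: W_def[abs_def])
  then have "prob {\<omega> \<in> space M. X i \<omega> = 2 ^ k \<and> \<delta> \<le> \<bar>W \<omega>\<bar>}
      = \<P>(\<omega> in M. X i \<omega> \<in> {2 ^ k}) * \<P>(\<omega> in M. W \<omega> \<in> {w. \<delta> \<le> \<bar>w\<bar>})"
    by (subst prob_indep_random_variable[symmetric]) auto
  also have "\<dots> \<le> 1 / 2 ^ k * (card J * 2 ^ k / \<delta>\<^sup>2)"
  proof (intro mult_mono)
    have W_bound: "\<bar>W \<omega>\<bar> \<le> card J * (2 ^ k + \<bar>real k - 1\<bar>)" for \<omega>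
    proof -
      have "\<bar>W \<omega>\<bar> \<le> (\<Sum>l\<in>J. \<bar>trunc_pow2 k (X l \<omega>) - (real k - 1)\<bar>)"
        unfolding W_def by (rule sum_abs)
      also have "\<dots> \<le> (\<Sum>l\<in>J. 2 ^ k + \<bar>real k - 1\<bar>)"
        by (intro sum_mono abs_trunc_pow2_deviation_le)
      finally show ?thesis by simp
    qed
    have "(W \<omega>)\<^sup>2 \<le> (card J * (2 ^ k + \<bar>real k - 1\<bar>))\<^sup>2" for \<omega>
      using power_mono[OF W_bound abs_ge_zero, of \<omega> 2] by simp
    then have "integrable M (\<lambda>\<omega>. (W \<omega>)\<^sup>2)"
      by (intro integrable_const_bound[where B="(card J * (2 ^ k + \<bar>real k - 1\<bar>))\<^sup>2"]) auto
    then have "\<P>(\<omega> in M. W \<omega> \<in> {w. \<delta> \<le> \<bar>w\<bar>}) \<le> expectation (\<lambda>\<omega>. (W \<omega>)\<^sup>2) / \<delta>\<^sup>2"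
      using second_moment_method[of W \<delta>] \<open>0 < \<delta>\<close> by simp
    also have "\<dots> \<le> card J * 2 ^ k / \<delta>\<^sup>2"
      unfolding W_def using J k by (intro divide_right_mono expectation_square_trunc_deviation_le) auto
    finally show "\<P>(\<omega> in M. W \<omega> \<in> {w. \<delta> \<le> \<bar>w\<bar>}) \<le> card J * 2 ^ k / \<delta>\<^sup>2" .
  qed (use i k prob_X_eq_pow2 in auto)
  also have "\<dots> = card J / \<delta>\<^sup>2" by simp
  finally show ?thesis unfolding W_def .
qed

lemma prob_X_less_pow2:
  assumes "1 \<le> l" "1 \<le> k"
  shows "1 - 2 / 2 ^ k \<le> prob {\<omega> \<in> space M. X l \<omega> < 2 ^ k}"
proof -
  have "prob (\<Union>t\<in>{1..<k}. {\<omega> \<in> space M. X l \<omega> = 2 ^ t}) = (\<Sum>t\<in>{1..<k}. prob {\<omega> \<in> space M. X l \<omega> = 2 ^ t})"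
    using assms by (intro measure_finite_Union) (auto simp: disjoint_family_on_def)
  also have "\<dots> = (\<Sum>t\<in>{1..<k}. 1 / 2 ^ t)"
    using assms by (intro sum.cong) (auto simp: prob_X_eq_pow2)
  also have "\<dots> = 1 - 2 / 2 ^ k"
    using \<open>1 \<le> k\<close> by (induction k rule: dec_induct) (auto simp: field_simps)
  finally have "prob (\<Union>t\<in>{1..<k}. {\<omega> \<in> space M. X l \<omega> = 2 ^ t}) = 1 - 2 / 2 ^ k" .
  moreover have "prob (\<Union>t\<in>{1..<k}. {\<omega> \<in> space M. X l \<omega> = 2 ^ t}) \<le> prob {\<omega> \<in> space M. X l \<omega> < 2 ^ k}"
    using assms by (intro finite_measure_mono) auto
  ultimately show ?thesis by simp
qed

lemma AE_X_pow2: "1 \<le> l \<Longrightarrow> AE \<omega> in M. \<exists>t. X l \<omega> = 2 ^ Suc t"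
proof -
  assume "1 \<le> l"
  let ?A = "\<lambda>t::nat. {\<omega> \<in> space M. X l \<omega> = 2 ^ Suc t}"
  have "(\<lambda>t. prob (?A t)) sums prob (\<Union>t. ?A t)"
    using \<open>1 \<le> l\<close> by (intro finite_measure_UNION) (auto simp: disjoint_family_on_def)
  moreover have "(\<lambda>t. prob (?A t)) sums 1"
    using \<open>1 \<le> l\<close> power_half_series by (simp add: prob_X_eq_pow2 power_one_over del: power_Suc)
  ultimately have "prob (\<Union>t. ?A t) = 1" by (rule sums_unique2)
  then have "AE \<omega> in M. \<omega> \<in> (\<Union>t. ?A t)" by (rule AE_prob_1)
  then show ?thesis by auto
qed

lemma prob_unique_max_ge:
  assumes i: "i \<in> {1..n}" and k: "1 \<le> k"
  shows "1 / 2 ^ k * (1 - 2 / 2 ^ k) ^ (n - 1)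
    \<le> prob {\<omega> \<in> space M. X i \<omega> = 2 ^ k \<and> (\<forall>l\<in>{1..n} - {i}. X l \<omega> < 2 ^ k)}"
proof -
  define A where "A l = (if l = i then {2 ^ k} else {..<2 ^ k::real})" for l
  have "prob {\<omega> \<in> space M. X i \<omega> = 2 ^ k \<and> (\<forall>l\<in>{1..n} - {i}. X l \<omega> < 2 ^ k)}
      = prob (\<Inter>l\<in>{1..n}. X l -` A l \<inter> space M)"
    using i by (intro arg_cong[where f=prob]) (auto simp: A_def split: if_splits)
  also have "\<dots> = (\<Prod>l\<in>{1..n}. prob (X l -` A l \<inter> space M))"
    using i by (intro indep_varsD[OF indep_X]) (auto simp: A_def)
  also have "\<dots> = prob (X i -` A i \<inter> space M) * (\<Prod>l\<in>{1..n} - {i}. prob (X l -` A l \<inter> space M))"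
    using i by (intro prod.remove) auto
  also have "prob (X i -` A i \<inter> space M) = 1 / 2 ^ k"
    using prob_X_eq_pow2[of i k] i k by (simp add: A_def vimage_def Int_def conj_commute)
  also have "(\<Prod>l\<in>{1..n} - {i}. 1 - 2 / 2 ^ k) \<le> (\<Prod>l\<in>{1..n} - {i}. prob (X l -` A l \<inter> space M))"
  proof (intro prod_mono conjI)
    fix l assume l: "l \<in> {1..n} - {i}"
    have "prob (X l -` A l \<inter> space M) = prob {\<omega> \<in> space M. X l \<omega> < 2 ^ k}"
      using l by (simp add: A_def vimage_def Int_def conj_commute)
    then show "1 - 2 / 2 ^ k \<le> prob (X l -` A l \<inter> space M)"
      using prob_X_less_pow2[of l k] l k by simp
    have "(2::real) / 2 ^ k \<le> 1" using k by (cases k) auto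
    then show "0 \<le> 1 - (2::real) / 2 ^ k" by simp
  qed
  then have "1 / 2 ^ k * (1 - 2 / 2 ^ k) ^ (n - 1)
      \<le> 1 / 2 ^ k * (\<Prod>l\<in>{1..n} - {i}. prob (X l -` A l \<inter> space M))"
    using i by (intro mult_left_mono) auto
  finally show ?thesis by simp
qed

lemma prob_Xmax_eq_ge:
  assumes n: "1 \<le> n" and k: "1 \<le> k" and small: "4 * real n \<le> 2 ^ k"
  shows "real n / (2 * 2 ^ k) \<le> prob {\<omega> \<in> space M. Xmax X n \<omega> = 2 ^ k}"
proof -
  define D where "D i = {\<omega> \<in> space M. X i \<omega> = 2 ^ k \<and> (\<forall>l\<in>{1..n} - {i}. X l \<omega> < 2 ^ k)}" for i
  have Bernoulli: "1 / 2 \<le> (1 - 2 / 2 ^ k :: real) ^ (n - 1)"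
  proof -
    have "(2::real) / 2 ^ k \<le> 1" using k by (cases k) auto
    then have "1 - 2 * real (n - 1) / 2 ^ k \<le> (1 - 2 / 2 ^ k :: real) ^ (n - 1)"
      using Bernoulli_inequality[of "- (2 / 2 ^ k) :: real" "n - 1"] by (simp add: mult.commute)
    moreover have "2 * real (n - 1) / 2 ^ k \<le> 1 / 2"
      using small n by (simp add: field_simps of_nat_diff)
    ultimately show ?thesis by linarith
  qed
  have "real n * (1 / 2 ^ k * (1 / 2)) \<le> real n * (1 / 2 ^ k * (1 - 2 / 2 ^ k) ^ (n - 1))"
    using Bernoulli by (intro mult_left_mono) auto
  also have "\<dots> = (\<Sum>i\<in>{1..n}. 1 / 2 ^ k * (1 - 2 / 2 ^ k) ^ (n - 1))" by simp
  also have "\<dots> \<le> (\<Sum>i\<in>{1..n}. prob (D i))"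
    unfolding D_def using k by (intro sum_mono prob_unique_max_ge) auto
  also have "\<dots> = prob (\<Union>i\<in>{1..n}. D i)"
  proof (intro measure_finite_Union[symmetric])
    show "disjoint_family_on D {1..n}"
      unfolding disjoint_family_on_def D_def by force
  qed (auto simp: D_def)
  also have "\<dots> \<le> prob {\<omega> \<in> space M. Xmax X n \<omega> = 2 ^ k}"
  proof (intro finite_measure_mono subsetI)
    fix \<omega> assume "\<omega> \<in> (\<Union>i\<in>{1..n}. D i)"
    then obtain i where i: "i \<in> {1..n}" "\<omega> \<in> D i" by auto
    have "Xmax X n \<omega> = 2 ^ k"
      unfolding Xmax_def
    proof (rule Max_eqI)
      fix y assume "y \<in> (\<lambda>i. X i \<omega>) ` {1..n}"
      then show "y \<le> 2 ^ k" using i by (force simp: D_def)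
    qed (use i in \<open>auto simp: D_def intro!: image_eqI[where x=i]\<close>)
    then show "\<omega> \<in> {\<omega> \<in> space M. Xmax X n \<omega> = 2 ^ k}" using i by (simp add: D_def)
  qed measurable
  finally show ?thesis by simp
qed

lemma prob_two_X_eq_le:
  assumes "1 \<le> k"
  shows "prob (\<Union>i\<in>{1..n}. \<Union>l\<in>{1..n} - {i}. {\<omega> \<in> space M. X i \<omega> = 2 ^ k \<and> X l \<omega> = 2 ^ k})
    \<le> (real n / 2 ^ k)\<^sup>2"
proof -
  have "prob (\<Union>i\<in>{1..n}. \<Union>l\<in>{1..n} - {i}. {\<omega> \<in> space M. X i \<omega> = 2 ^ k \<and> X l \<omega> = 2 ^ k})
      \<le> (\<Sum>i\<in>{1..n}. \<Sum>l\<in>{1..n} - {i}. prob {\<omega> \<in> space M. X i \<omega> = 2 ^ k \<and> X l \<omega> = 2 ^ k})"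
    by (intro order_trans[OF finite_measure_subadditive_finite] sum_mono finite_measure_subadditive_finite) auto
  also have "\<dots> = (\<Sum>i\<in>{1..n}. \<Sum>l\<in>{1..n} - {i}. 1 / 2 ^ k * (1 / 2 ^ k))"
  proof (intro sum.cong refl)
    fix i l assume "i \<in> {1..n}" "l \<in> {1..n} - {i}"
    then have "indep_var borel (X i) borel (X l)"
      using indep_var_X_X[of i l "\<lambda>x. x" "\<lambda>x. x"] by auto
    then have "prob {\<omega> \<in> space M. X i \<omega> = 2 ^ k \<and> X l \<omega> = 2 ^ k}
        = \<P>(\<omega> in M. X i \<omega> \<in> {2 ^ k}) * \<P>(\<omega> in M. X l \<omega> \<in> {2 ^ k})"
      by (subst prob_indep_random_variable[symmetric]) auto
    then show "prob {\<omega> \<in> space M. X i \<omega> = 2 ^ k \<and> X l \<omega> = 2 ^ k} = 1 / 2 ^ k * (1 / 2 ^ k)"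
      using prob_X_eq_pow2[of i k] prob_X_eq_pow2[of l k] \<open>i \<in> {1..n}\<close> \<open>l \<in> {1..n} - {i}\<close> assms
      by simp
  qed
  also have "\<dots> \<le> (\<Sum>i\<in>{1..n}. \<Sum>l\<in>{1..n}. 1 / 2 ^ k * (1 / 2 ^ k))"
    by (intro sum_mono sum_mono2) auto
  also have "\<dots> = (real n / 2 ^ k)\<^sup>2" by (simp add: power2_eq_square)
  finally show ?thesis .
qed

lemma prob_max_deviation_le:
  assumes k: "1 \<le> k" and "0 < \<delta>"
  shows "prob (\<Union>i\<in>{1..n}. {\<omega> \<in> space M. X i \<omega> = 2 ^ k
      \<and> \<delta> \<le> \<bar>\<Sum>l\<in>{1..n} - {i}. trunc_pow2 k (X l \<omega>) - (real k - 1)\<bar>}) \<le> (real n / \<delta>)\<^sup>2"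
proof -
  have "prob (\<Union>i\<in>{1..n}. {\<omega> \<in> space M. X i \<omega> = 2 ^ k
      \<and> \<delta> \<le> \<bar>\<Sum>l\<in>{1..n} - {i}. trunc_pow2 k (X l \<omega>) - (real k - 1)\<bar>})
    \<le> (\<Sum>i\<in>{1..n}. prob {\<omega> \<in> space M. X i \<omega> = 2 ^ k
      \<and> \<delta> \<le> \<bar>\<Sum>l\<in>{1..n} - {i}. trunc_pow2 k (X l \<omega>) - (real k - 1)\<bar>})"
    by (intro finite_measure_subadditive_finite) auto
  also have "\<dots> \<le> (\<Sum>i\<in>{1..n}. card ({1..n} - {i}) / \<delta>\<^sup>2)"
    using assms by (intro sum_mono prob_X_eq_deviation_le) auto
  also have "\<dots> \<le> (\<Sum>i\<in>{1..n}. real n / \<delta>\<^sup>2)"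
    by (intro sum_mono divide_right_mono) (auto simp: card_Diff_singleton_if)
  finally show ?thesis by (simp add: power2_eq_square)
qed

lemma prob_ratio_deviation_le:
  assumes n: "1 \<le> n" and k: "1 \<le> k" and "0 < \<epsilon>"
    and centering: "\<bar>real (n - 1) * (real k - 1) / 2 ^ k - c\<bar> \<le> \<epsilon> / 2"
  shows "prob {\<omega> \<in> space M. \<epsilon> < \<bar>Ssum X n \<omega> / Xmax X n \<omega> - c - 1\<bar> \<and> Xmax X n \<omega> = 2 ^ k}
    \<le> (1 + 4 / \<epsilon>\<^sup>2) * (real n / 2 ^ k)\<^sup>2"
proof -
  define \<delta> :: real where "\<delta> = \<epsilon> * 2 ^ k / 2"
  define Ties where "Ties = (\<Union>i\<in>{1..n}. \<Union>l\<in>{1..n} - {i}. {\<omega> \<in> space M. X i \<omega> = 2 ^ k \<and> X l \<omega> = 2 ^ k})"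
  define Deviates where "Deviates = (\<Union>i\<in>{1..n}. {\<omega> \<in> space M. X i \<omega> = 2 ^ k
      \<and> \<delta> \<le> \<bar>\<Sum>l\<in>{1..n} - {i}. trunc_pow2 k (X l \<omega>) - (real k - 1)\<bar>})"
  have "AE \<omega> in M. \<forall>l\<in>{1..n}. \<exists>t. X l \<omega> = 2 ^ Suc t"
    by (intro AE_finite_allI AE_X_pow2) auto
  then have "AE \<omega> in M. \<omega> \<in> {\<omega> \<in> space M. \<epsilon> < \<bar>Ssum X n \<omega> / Xmax X n \<omega> - c - 1\<bar> \<and> Xmax X n \<omega> = 2 ^ k}
      \<longrightarrow> \<omega> \<in> Ties \<union> Deviates"
  proof (rule eventually_mono, intro impI)
    fix \<omega> assume "\<forall>l\<in>{1..n}. \<exists>t. X l \<omega> = 2 ^ Suc t"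
      and "\<omega> \<in> {\<omega> \<in> space M. \<epsilon> < \<bar>Ssum X n \<omega> / Xmax X n \<omega> - c - 1\<bar> \<and> Xmax X n \<omega> = 2 ^ k}"
    then show "\<omega> \<in> Ties \<union> Deviates"
      by (elim large_ratio_deviation_cases[OF n _ _ _ centering])
        (auto simp: Ties_def Deviates_def \<delta>_def)
  qed
  then have "prob {\<omega> \<in> space M. \<epsilon> < \<bar>Ssum X n \<omega> / Xmax X n \<omega> - c - 1\<bar> \<and> Xmax X n \<omega> = 2 ^ k}
      \<le> prob (Ties \<union> Deviates)"
    by (rule finite_measure_mono_AE) (unfold Ties_def Deviates_def, measurable)
  also have "\<dots> \<le> prob Ties + prob Deviates"
    by (rule measure_Un_le) (unfold Ties_def Deviates_def, measurable)
  also have "\<dots> \<le> (real n / 2 ^ k)\<^sup>2 + (real n / \<delta>)\<^sup>2"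
    unfolding Ties_def Deviates_def using k \<open>0 < \<epsilon>\<close>
    by (intro add_mono prob_two_X_eq_le prob_max_deviation_le) (auto simp: \<delta>_def)
  also have "\<dots> = (1 + 4 / \<epsilon>\<^sup>2) * (real n / 2 ^ k)\<^sup>2"
    using \<open>0 < \<epsilon>\<close> by (simp add: \<delta>_def field_simps power2_eq_square)
  finally show ?thesis .
qed

lemma cond_prob_ratio_deviation_le:
  assumes n: "1 \<le> n" and k: "1 \<le> k" and "0 < \<epsilon>"
    and centering: "\<bar>real (n - 1) * (real k - 1) / 2 ^ k - c\<bar> \<le> \<epsilon> / 2"
    and small: "4 * real n \<le> 2 ^ k"
  shows "cond_prob M (\<lambda>\<omega>. \<epsilon> < \<bar>Ssum X n \<omega> / Xmax X n \<omega> - c - 1\<bar>) (\<lambda>\<omega>. Xmax X n \<omega> = 2 ^ k)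
    \<le> 2 * (1 + 4 / \<epsilon>\<^sup>2) * (real n / 2 ^ k)"
proof -
  have "cond_prob M (\<lambda>\<omega>. \<epsilon> < \<bar>Ssum X n \<omega> / Xmax X n \<omega> - c - 1\<bar>) (\<lambda>\<omega>. Xmax X n \<omega> = 2 ^ k)
      = prob {\<omega> \<in> space M. \<epsilon> < \<bar>Ssum X n \<omega> / Xmax X n \<omega> - c - 1\<bar> \<and> Xmax X n \<omega> = 2 ^ k}
        / prob {\<omega> \<in> space M. Xmax X n \<omega> = 2 ^ k}"
    by (simp add: cond_prob_def)
  also have "\<dots> \<le> (1 + 4 / \<epsilon>\<^sup>2) * (real n / 2 ^ k)\<^sup>2 / (real n / (2 * 2 ^ k))"
    using n by (intro frac_le prob_ratio_deviation_le prob_Xmax_eq_ge assms) auto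
  also have "\<dots> = 2 * (1 + 4 / \<epsilon>\<^sup>2) * (real n / 2 ^ k)"
    using n by (simp add: field_simps power2_eq_square)
  finally show ?thesis .
qed

lemma cond_prob_ratio_deviation_tendsto_0:
  fixes k :: "nat \<Rightarrow> nat" and c :: "nat \<Rightarrow> real"
  assumes small: "(\<lambda>n. real n / 2 ^ k n) \<longlonglongrightarrow> 0"
    and centering: "(\<lambda>n. real (n - 1) * (real (k n) - 1) / 2 ^ k n - c n) \<longlonglongrightarrow> 0"
    and "0 < \<epsilon>"
  shows "(\<lambda>n. cond_prob M (\<lambda>\<omega>. \<epsilon> < \<bar>Ssum X n \<omega> / Xmax X n \<omega> - c n - 1\<bar>) (\<lambda>\<omega>. Xmax X n \<omega> = 2 ^ k n))
    \<longlonglongrightarrow> 0"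
proof (rule Lim_null_comparison)
  show "(\<lambda>n. 2 * (1 + 4 / \<epsilon>\<^sup>2) * (real n / 2 ^ k n)) \<longlonglongrightarrow> 0"
    using small by (rule tendsto_mult_right_zero)
  have "\<forall>\<^sub>F n in sequentially. real n / 2 ^ k n < 1 / 4"
    using order_tendstoD(2)[OF small, of "1 / 4"] by simp
  moreover have "\<forall>\<^sub>F n in sequentially. \<bar>real (n - 1) * (real (k n) - 1) / 2 ^ k n - c n\<bar> < \<epsilon> / 2"
    using order_tendstoD(2)[OF tendsto_rabs_zero[OF centering], of "\<epsilon> / 2"] \<open>0 < \<epsilon>\<close> by simp
  ultimately have "\<forall>\<^sub>F n in sequentially. 1 \<le> n \<and> real n / 2 ^ k n < 1 / 4
      \<and> \<bar>real (n - 1) * (real (k n) - 1) / 2 ^ k n - c n\<bar> < \<epsilon> / 2"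
    using eventually_ge_at_top by (intro eventually_conj)
  then show "\<forall>\<^sub>F n in sequentially. norm (cond_prob M (\<lambda>\<omega>. \<epsilon> < \<bar>Ssum X n \<omega> / Xmax X n \<omega> - c n - 1\<bar>)
      (\<lambda>\<omega>. Xmax X n \<omega> = 2 ^ k n)) \<le> 2 * (1 + 4 / \<epsilon>\<^sup>2) * (real n / 2 ^ k n)"
  proof (rule eventually_mono, elim conjE)
    fix n assume n: "1 \<le> n" and "real n / 2 ^ k n < 1 / 4"
      and "\<bar>real (n - 1) * (real (k n) - 1) / 2 ^ k n - c n\<bar> < \<epsilon> / 2"
    moreover from this have "4 * real n \<le> 2 ^ k n" by (simp add: field_simps)
    moreover from this n have "1 \<le> k n" by (cases "k n") auto
    ultimately show "norm (cond_prob M (\<lambda>\<omega>. \<epsilon> < \<bar>Ssum X n \<omega> / Xmax X n \<omega> - c n - 1\<bar>)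
        (\<lambda>\<omega>. Xmax X n \<omega> = 2 ^ k n)) \<le> 2 * (1 + 4 / \<epsilon>\<^sup>2) * (real n / 2 ^ k n)"
      using cond_prob_ratio_deviation_le[of n "k n" \<epsilon> "c n"] \<open>0 < \<epsilon>\<close> by (simp add: cond_prob_def)
  qed
qed

end

definition log2_nlog2n :: "nat \<Rightarrow> real" where
  "log2_nlog2n n = log 2 (real n) + log 2 (log 2 (real n))"

lemma two_powr_log2_nlog2n: "2 \<le> n \<Longrightarrow> 2 powr log2_nlog2n n = real n * log 2 (real n)"
  unfolding log2_nlog2n_def by (simp add: powr_add)

lemma kseq_eventually_ge_1: "\<forall>\<^sub>F n in sequentially. 1 \<le> kseq j n"
proof -
  have "filterlim log2_nlog2n at_top sequentially"
    unfolding log2_nlog2n_def by real_asymp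
  then have "\<forall>\<^sub>F n in sequentially. 2 - real_of_int j \<le> log2_nlog2n n"
    by (simp add: filterlim_at_top)
  then show ?thesis
    by eventually_elim (simp add: kseq_def log2_nlog2n_def[symmetric]; linarith)
qed

lemma two_powr_kseq_ge:
  assumes "2 \<le> n"
  shows "2 powr (real_of_int j - 1) * (real n * log 2 (real n)) \<le> 2 powr real_of_int (kseq j n)"
proof -
  have "log2_nlog2n n + (real_of_int j - 1) \<le> real_of_int (kseq j n)"
    unfolding kseq_def log2_nlog2n_def by linarith
  then have "2 powr (log2_nlog2n n + (real_of_int j - 1)) \<le> 2 powr real_of_int (kseq j n)"
    by simp
  then show ?thesis
    using assms by (simp add: powr_add two_powr_log2_nlog2n mult.commute)
qed

lemma centering_term_eq:
  assumes "2 \<le> n"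
  shows "2 powr (- real_of_int j) * 2 powr frac (log 2 (real n) + log 2 (log 2 (real n)))
    = real n * log 2 (real n) / 2 powr real_of_int (kseq j n)"
proof -
  have "2 powr (- real_of_int j) * 2 powr frac (log2_nlog2n n)
      = 2 powr (log2_nlog2n n - real_of_int (kseq j n))"
    by (simp add: kseq_def frac_def log2_nlog2n_def[symmetric] algebra_simps flip: powr_add)
  also have "\<dots> = real n * log 2 (real n) / 2 powr real_of_int (kseq j n)"
    using assms by (simp add: powr_diff two_powr_log2_nlog2n)
  finally show ?thesis unfolding log2_nlog2n_def .
qed

lemma n_div_two_powr_kseq_tendsto_0: "(\<lambda>n. real n / 2 powr real_of_int (kseq j n)) \<longlonglongrightarrow> 0"
proof (rule Lim_null_comparison)
  have "(\<lambda>n::nat. 1 / log 2 (real n)) \<longlonglongrightarrow> 0" by real_asymp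
  then show "(\<lambda>n. 2 powr (1 - real_of_int j) * (1 / log 2 (real n))) \<longlonglongrightarrow> 0"
    by (rule tendsto_mult_right_zero)
  show "\<forall>\<^sub>F n in sequentially. norm (real n / 2 powr real_of_int (kseq j n))
      \<le> 2 powr (1 - real_of_int j) * (1 / log 2 (real n))"
    using eventually_ge_at_top[of 2]
  proof eventually_elim
    case (elim n)
    then have pos: "0 < 2 powr (real_of_int j - 1) * (real n * log 2 (real n))" by simp
    have "real n / 2 powr real_of_int (kseq j n) \<le> real n / (2 powr (real_of_int j - 1) * (real n * log 2 (real n)))"
      using elim pos by (intro divide_left_mono two_powr_kseq_ge) auto
    also have "\<dots> = 2 powr (1 - real_of_int j) * (1 / log 2 (real n))"
      using elim by (simp add: powr_diff field_simps)
    finally show ?case by simp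
  qed
qed

lemma kseq_mean_error_le:
  assumes "2 \<le> n"
  shows "\<bar>real (n - 1) * (real_of_int (kseq j n) - 1) - real n * log 2 (real n)\<bar>
    \<le> real n * (log 2 (log 2 (real n)) + \<bar>real_of_int j\<bar> + 2)
      + (log 2 (real n) + log 2 (log 2 (real n)) + \<bar>real_of_int j\<bar> + 2)"
proof -
  define K where "K = real_of_int (kseq j n)"
  define L where "L = log 2 (real n)"
  have L: "1 \<le> L" "0 \<le> log 2 L" using assms by (simp_all add: L_def)
  have "L + log 2 L - 1 + real_of_int j < K" "K \<le> L + log 2 L + real_of_int j"
    unfolding K_def kseq_def L_def by linarith+
  then have K_bounds: "\<bar>K - 1 - L\<bar> \<le> log 2 L + \<bar>real_of_int j\<bar> + 2"
      "\<bar>K - 1\<bar> \<le> L + log 2 L + \<bar>real_of_int j\<bar> + 2"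
    using L abs_ge_self[of "real_of_int j"] abs_ge_minus_self[of "real_of_int j"]
    unfolding abs_le_iff by linarith+
  have "real (n - 1) * (K - 1) - real n * L = real n * (K - 1 - L) - (K - 1)"
    using assms by (simp add: of_nat_diff algebra_simps)
  also have "\<bar>\<dots>\<bar> \<le> real n * \<bar>K - 1 - L\<bar> + \<bar>K - 1\<bar>"
    by (metis abs_mult abs_of_nat abs_triangle_ineq4)
  also have "\<dots> \<le> real n * (log 2 L + \<bar>real_of_int j\<bar> + 2) + (L + log 2 L + \<bar>real_of_int j\<bar> + 2)"
    using K_bounds by (intro add_mono mult_left_mono) auto
  finally show ?thesis unfolding K_def L_def .
qed

lemma kseq_centering_tendsto_0:
  "(\<lambda>n. real (n - 1) * (real_of_int (kseq j n) - 1) / 2 powr real_of_int (kseq j n)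
      - 2 powr (- real_of_int j) * 2 powr frac (log 2 (real n) + log 2 (log 2 (real n)))) \<longlonglongrightarrow> 0"
proof (rule Lim_null_comparison)
  define E where "E n = real n * (log 2 (log 2 (real n)) + \<bar>real_of_int j\<bar> + 2)
    + (log 2 (real n) + log 2 (log 2 (real n)) + \<bar>real_of_int j\<bar> + 2)" for n :: nat
  have "(\<lambda>n. E n / (real n * log 2 (real n))) \<longlonglongrightarrow> 0" unfolding E_def by real_asymp
  then show "(\<lambda>n. 2 powr (1 - real_of_int j) * (E n / (real n * log 2 (real n)))) \<longlonglongrightarrow> 0"
    by (rule tendsto_mult_right_zero)
  show "\<forall>\<^sub>F n in sequentially. norm (real (n - 1) * (real_of_int (kseq j n) - 1) / 2 powr real_of_int (kseq j n)
      - 2 powr (- real_of_int j) * 2 powr frac (log 2 (real n) + log 2 (log 2 (real n))))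
    \<le> 2 powr (1 - real_of_int j) * (E n / (real n * log 2 (real n)))"
    using eventually_ge_at_top[of 2]
  proof eventually_elim
    case (elim n)
    have pos: "0 < 2 powr (real_of_int j - 1) * (real n * log 2 (real n))" using elim by simp
    have "norm (real (n - 1) * (real_of_int (kseq j n) - 1) / 2 powr real_of_int (kseq j n)
        - real n * log 2 (real n) / 2 powr real_of_int (kseq j n))
      = \<bar>real (n - 1) * (real_of_int (kseq j n) - 1) - real n * log 2 (real n)\<bar> / 2 powr real_of_int (kseq j n)"
      by (simp add: abs_div flip: diff_divide_distrib)
    also have "\<dots> \<le> E n / (2 powr (real_of_int j - 1) * (real n * log 2 (real n)))"
      using kseq_mean_error_le[OF elim, of j] pos two_powr_kseq_ge[OF elim, of j]
      unfolding E_def by (intro frac_le) auto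
    also have "\<dots> = 2 powr (1 - real_of_int j) * (E n / (real n * log 2 (real n)))"
      using elim by (simp add: powr_diff field_simps)
    finally show ?case
      using centering_term_eq[OF elim, of j] by simp
  qed
qed

theorem mainTheorem7:
  fixes M :: "'a measure" and X :: "nat \<Rightarrow> 'a \<Rightarrow> real" and j :: int
  assumes "prob_space M"
    and "prob_space.indep_vars M (\<lambda>_. borel) X {1..}"
    and "\<And>i k. i \<ge> 1 \<Longrightarrow> k \<ge> 1 \<Longrightarrow>
           measure M {\<omega> \<in> space M. X i \<omega> = 2 ^ k} = 1 / 2 ^ k"
    and "\<epsilon> > 0"
  shows "(\<lambda>n. cond_prob M
            (\<lambda>\<omega>. \<bar>Ssum X n \<omega> / Xmax X n \<omega>
                   - 2 powr (- real_of_int j)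
                     * 2 powr frac (log 2 (real n) + log 2 (log 2 (real n))) - 1\<bar> > \<epsilon>)
            (\<lambda>\<omega>. Xmax X n \<omega> = 2 powr real_of_int (kseq j n)))
         \<longlonglongrightarrow> 0"
proof -
  interpret st_petersburg M X
    using assms(1-3) by (simp add: st_petersburg_def st_petersburg_axioms_def)
  define k where "k n = nat (kseq j n)" for n
  have k: "\<forall>\<^sub>F n in sequentially.
      real (k n) = real_of_int (kseq j n) \<and> 2 powr real_of_int (kseq j n) = 2 ^ k n"
    using kseq_eventually_ge_1[of j] by eventually_elim (simp add: k_def flip: powr_realpow)
  have "(\<lambda>n. real n / 2 ^ k n) \<longlonglongrightarrow> 0"
    using n_div_two_powr_kseq_tendsto_0[of j]
    by (rule Lim_transform_eventually) (use k in \<open>auto elim: eventually_mono\<close>)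
  moreover have "(\<lambda>n. real (n - 1) * (real (k n) - 1) / 2 ^ k n
      - 2 powr (- real_of_int j) * 2 powr frac (log 2 (real n) + log 2 (log 2 (real n)))) \<longlonglongrightarrow> 0"
    using kseq_centering_tendsto_0[of j]
    by (rule Lim_transform_eventually) (use k in \<open>auto elim: eventually_mono\<close>)
  ultimately have "(\<lambda>n. cond_prob M
      (\<lambda>\<omega>. \<epsilon> < \<bar>Ssum X n \<omega> / Xmax X n \<omega> - 2 powr (- real_of_int j)
        * 2 powr frac (log 2 (real n) + log 2 (log 2 (real n))) - 1\<bar>) (\<lambda>\<omega>. Xmax X n \<omega> = 2 ^ k n)) \<longlonglongrightarrow> 0"
    using \<open>\<epsilon> > 0\<close> by (rule cond_prob_ratio_deviation_tendsto_0)
  then show ?thesis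
    by (rule Lim_transform_eventually) (use k in \<open>auto elim: eventually_mono\<close>)
qed

end
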